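(* Let $M$ be a $*$-left Ehresmann monoid with basis $H$. Then: (i) if $h_1\cdots h_n$ is in $H$-canonical form, then $(h_1\cdots h_n)^*=h_n^*$ and $(h_1\cdots h_n)^+=h_1^+$; (ii) if $h\in H$ and $k\in H\setminus E$, then $h^*\ge k^+$ if and only if $hk\in H$, and in that case $(hk)^*=k^*$.
   Context: A $*$-left Ehresmann monoid is a monoid $M$ with unary operations $+,*$ such that $x^+x=x$, $(x^+y^+)^+=x^+y^+$, $x^+y^+=y^+x^+$, $(xy)^+=(xy^+)^+$, $xx^*=x$, $(x^* )^*=x^*$, $x^*y^*=y^*x^*$, $(xy^* )^*y^*=(xy^* )^*$, $(x^* )^+=x^*$, $(x^+)^*=x^+$. Projections: $E=\{a^+\}=\{a^*\}$, ordered by $e\le f$ iff $ef=e$; $\sigma$ is the least monoid congruence containing $E\times E$. $H\subseteq M$ is atomic if: (H1) $E\subseteq H$; (H2) $h\in H,e\in E$ imply $he\in H$ and $(he)^*=h^*e$; (H3) if $h\in H$, $k\in H\setminus E$, $h^*\ge k^+$ then $hk\in H$ and $(hk)^*=k^*$; (H4) every $m\in M$ is $\sigma$-related to some $h\in H$; (H5) if $h,k,w\in H$, $hk\,\sigma\,w$ and $k^*=w^*$, then some $u\in H$ has $u\,\sigma\,h$ and $u^*\ge k^+$. An expression $m=h_1\cdots h_n$ ($n\ge1$, $h_i\in H$) is in $H$-canonical form if $h_i^*<h_{i+1}^+$ for $1\le i<n$ and $h_i\notin E$ for $2\le i\le n$. $M$ has $H$-canonical forms if every element has exactly one expression in $H$-canonical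 form. $H$ is a basis of $M$ if $H$ generates $M$ as a semigroup, $H$ is atomic and $M$ has $H$-canonical forms. *)

theory Defs
  imports Main
begin

definition star_left_ehresmann ::
  "('a \<Rightarrow> 'a \<Rightarrow> 'a) \<Rightarrow> 'a \<Rightarrow> ('a \<Rightarrow> 'a) \<Rightarrow> ('a \<Rightarrow> 'a) \<Rightarrow> bool" where
  "star_left_ehresmann mul one pl st \<longleftrightarrow>
     (\<forall>x y z. mul (mul x y) z = mul x (mul y z)) \<and>
     (\<forall>x. mul one x = x) \<and> (\<forall>x. mul x one = x) \<and>
     (\<forall>x. mul (pl x) x = x) \<and>
     (\<forall>x y. pl (mul (pl x) (pl y)) = mul (pl x) (pl y)) \<and>
     (\<forall>x y. mul (pl x) (pl y) = mul (pl y) (pl x)) \<and>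
     (\<forall>x y. pl (mul x y) = pl (mul x (pl y))) \<and>
     (\<forall>x. mul x (st x) = x) \<and>
     (\<forall>x. st (st x) = st x) \<and>
     (\<forall>x y. mul (st x) (st y) = mul (st y) (st x)) \<and>
     (\<forall>x y. mul (st (mul x (st y))) (st y) = st (mul x (st y))) \<and>
     (\<forall>x. pl (st x) = st x) \<and>
     (\<forall>x. st (pl x) = pl x)"

definition projections :: "('a \<Rightarrow> 'a) \<Rightarrow> 'a set" where
  "projections pl = range pl"

definition proj_le :: "('a \<Rightarrow> 'a \<Rightarrow> 'a) \<Rightarrow> 'a \<Rightarrow> 'a \<Rightarrow> bool" where
  "proj_le mul e f \<longleftrightarrow> mul e f = e"

definition proj_less :: "('a \<Rightarrow> 'a \<Rightarrow> 'a) \<Rightarrow> 'a \<Rightarrow> 'a \<Rightarrow> bool" where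
  "proj_less mul e f \<longleftrightarrow> proj_le mul e f \<and> e \<noteq> f"

definition monoid_congruence :: "('a \<Rightarrow> 'a \<Rightarrow> 'a) \<Rightarrow> 'a rel \<Rightarrow> bool" where
  "monoid_congruence mul r \<longleftrightarrow> equiv UNIV r \<and>
     (\<forall>a b c d. (a, b) \<in> r \<longrightarrow> (c, d) \<in> r \<longrightarrow> (mul a c, mul b d) \<in> r)"

definition sigma :: "('a \<Rightarrow> 'a \<Rightarrow> 'a) \<Rightarrow> ('a \<Rightarrow> 'a) \<Rightarrow> 'a rel" where
  "sigma mul pl = \<Inter> {r. monoid_congruence mul r \<and> projections pl \<times> projections pl \<subseteq> r}"

definition atomic ::
  "('a \<Rightarrow> 'a \<Rightarrow> 'a) \<Rightarrow> ('a \<Rightarrow> 'a) \<Rightarrow> ('a \<Rightarrow> 'a) \<Rightarrow> 'a set \<Rightarrow> bool" where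
  "atomic mul pl st H \<longleftrightarrow>
     \<comment> \<open>(H1)\<close>
     projections pl \<subseteq> H \<and>
     \<comment> \<open>(H2)\<close>
     (\<forall>h\<in>H. \<forall>e\<in>projections pl. mul h e \<in> H \<and> st (mul h e) = mul (st h) e) \<and>
     \<comment> \<open>(H3)\<close>
     (\<forall>h\<in>H. \<forall>k\<in>H - projections pl. proj_le mul (pl k) (st h) \<longrightarrow>
         mul h k \<in> H \<and> st (mul h k) = st k) \<and>
     \<comment> \<open>(H4)\<close>
     (\<forall>m. \<exists>h\<in>H. (m, h) \<in> sigma mul pl) \<and>
     \<comment> \<open>(H5)\<close>
     (\<forall>h\<in>H. \<forall>k\<in>H. \<forall>w\<in>H. (mul h k, w) \<in> sigma mul pl \<longrightarrow> st k = st w \<longrightarrow>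
         (\<exists>u\<in>H. (u, h) \<in> sigma mul pl \<and> proj_le mul (pl k) (st u)))"

definition list_prod :: "('a \<Rightarrow> 'a \<Rightarrow> 'a) \<Rightarrow> 'a \<Rightarrow> 'a list \<Rightarrow> 'a" where
  "list_prod mul one hs = foldr mul hs one"

definition canonical_form ::
  "('a \<Rightarrow> 'a \<Rightarrow> 'a) \<Rightarrow> ('a \<Rightarrow> 'a) \<Rightarrow> ('a \<Rightarrow> 'a) \<Rightarrow> 'a set \<Rightarrow> 'a list \<Rightarrow> bool" where
  "canonical_form mul pl st H hs \<longleftrightarrow>
     hs \<noteq> [] \<and> set hs \<subseteq> H \<and>
     (\<forall>i. Suc i < length hs \<longrightarrow> proj_less mul (st (hs ! i)) (pl (hs ! Suc i))) \<and>
     (\<forall>i. 1 \<le> i \<and> i < length hs \<longrightarrow> hs ! i \<notin> projections pl)"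

definition has_canonical_forms ::
  "('a \<Rightarrow> 'a \<Rightarrow> 'a) \<Rightarrow> 'a \<Rightarrow> ('a \<Rightarrow> 'a) \<Rightarrow> ('a \<Rightarrow> 'a) \<Rightarrow> 'a set \<Rightarrow> bool" where
  "has_canonical_forms mul one pl st H \<longleftrightarrow>
     (\<forall>m. \<exists>!hs. canonical_form mul pl st H hs \<and> list_prod mul one hs = m)"

definition generates_semigroup :: "('a \<Rightarrow> 'a \<Rightarrow> 'a) \<Rightarrow> 'a \<Rightarrow> 'a set \<Rightarrow> bool" where
  "generates_semigroup mul one H \<longleftrightarrow>
     (\<forall>m. \<exists>hs. hs \<noteq> [] \<and> set hs \<subseteq> H \<and> list_prod mul one hs = m)"

definition is_basis ::
  "('a \<Rightarrow> 'a \<Rightarrow> 'a) \<Rightarrow> 'a \<Rightarrow> ('a \<Rightarrow> 'a) \<Rightarrow> ('a \<Rightarrow> 'a) \<Rightarrow> 'a set \<Rightarrow> bool" where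
  "is_basis mul one pl st H \<longleftrightarrow>
     generates_semigroup mul one H \<and> atomic mul pl st H \<and> has_canonical_forms mul one pl st H"

end

theory Submission
  imports Defs
begin

(* For (ii): if hk \<in> H although k^+ \<le> h^* fails, then h' = h (h^* k^+) lies in H by (H2),
   satisfies h' k = h k and h'^* = h^* k^+ < k^+, so h' k and hk would be two distinct canonical
   forms of the same element.
   For (i): x^* is the least projection e with x e = x, so m = h_1 ... h_n gives m^* \<le> h_n^*.
   Conversely, repeatedly using (H2), (H3) and the same trick, any product of elements of H
   times g \<in> H has a canonical form whose last factor has star below g^*; applied to m m^* = m,
   uniqueness identifies this form with h_1 ... h_n, so h_n^* \<le> m^*. Finally h_i^* \<le> h_(i+1)^+
   means h_i h_(i+1)^+ = h_i, and (xy)^+ = (x y^+)^+ propagates h_1^+ along the product. *)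

lemma canonical_form_singleton [simp]:
  "canonical_form mul pl st H [h] \<longleftrightarrow> h \<in> H"
  unfolding canonical_form_def by auto

lemma canonical_form_ConsD:
  assumes "canonical_form mul pl st H (h # hs)" and "hs \<noteq> []"
  shows "canonical_form mul pl st H hs" and "proj_less mul (st h) (pl (hd hs))"
  using assms unfolding canonical_form_def by (fastforce simp: hd_conv_nth)+

lemma canonical_form_snoc:
  assumes "qs \<noteq> []"
  shows "canonical_form mul pl st H (qs @ [q]) \<longleftrightarrow>
    canonical_form mul pl st H qs \<and> q \<in> H \<and> q \<notin> projections pl \<and>
    proj_less mul (st (last qs)) (pl q)"
proof -
  let ?n = "length qs"
  have last: "last qs = qs ! (?n - 1)" and n: "Suc (?n - 1) = ?n" "1 \<le> ?n"
    using assms by (simp_all add: last_conv_nth Suc_leI)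
  have "(\<forall>i. Suc i < Suc ?n \<longrightarrow> proj_less mul (st ((qs @ [q]) ! i)) (pl ((qs @ [q]) ! Suc i))) \<longleftrightarrow>
      (\<forall>i. Suc i < ?n \<longrightarrow> proj_less mul (st (qs ! i)) (pl (qs ! Suc i))) \<and>
      proj_less mul (st (last qs)) (pl q)"
    using n unfolding last less_Suc_eq by (auto simp: nth_append) (metis diff_Suc_1)
  moreover have "(\<forall>i. 1 \<le> i \<and> i < Suc ?n \<longrightarrow> (qs @ [q]) ! i \<notin> projections pl) \<longleftrightarrow>
      (\<forall>i. 1 \<le> i \<and> i < ?n \<longrightarrow> qs ! i \<notin> projections pl) \<and> q \<notin> projections pl"
    using n unfolding less_Suc_eq by (auto simp: nth_append)
  ultimately show ?thesis
    using assms unfolding canonical_form_def by auto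
qed

locale star_left_ehresmann_monoid =
  fixes mul :: "'a \<Rightarrow> 'a \<Rightarrow> 'a" (infixl "\<cdot>" 70) and one :: 'a and pl st :: "'a \<Rightarrow> 'a"
  assumes star_left_ehresmann: "star_left_ehresmann mul one pl st"
begin

abbreviation E :: "'a set" where "E \<equiv> projections pl"
abbreviation le_proj :: "'a \<Rightarrow> 'a \<Rightarrow> bool" (infix "\<preceq>" 50) where "e \<preceq> f \<equiv> proj_le mul e f"
abbreviation less_proj :: "'a \<Rightarrow> 'a \<Rightarrow> bool" (infix "\<prec>" 50) where "e \<prec> f \<equiv> proj_less mul e f"
abbreviation lprod :: "'a list \<Rightarrow> 'a" where "lprod hs \<equiv> list_prod mul one hs"

lemma
  shows mul_assoc: "x \<cdot> y \<cdot> z = x \<cdot> (y \<cdot> z)"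
    and one_mul [simp]: "one \<cdot> x = x"
    and mul_one [simp]: "x \<cdot> one = x"
    and pl_mul_self [simp]: "pl x \<cdot> x = x"
    and pl_mul_pl: "pl (pl x \<cdot> pl y) = pl x \<cdot> pl y"
    and pl_commute: "pl x \<cdot> pl y = pl y \<cdot> pl x"
    and pl_mul_right: "pl (x \<cdot> y) = pl (x \<cdot> pl y)"
    and mul_st_self [simp]: "x \<cdot> st x = x"
    and st_mul_st: "st (x \<cdot> st y) \<cdot> st y = st (x \<cdot> st y)"
    and pl_st [simp]: "pl (st x) = st x"
    and st_pl [simp]: "st (pl x) = pl x"
  using star_left_ehresmann unfolding star_left_ehresmann_def by blast+

lemma pl_one [simp]: "pl one = one"
  using pl_mul_self [of one] by simp

lemma pl_pl [simp]: "pl (pl x) = pl x"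
  using pl_mul_pl [of x one] by simp

lemma projections_iff: "e \<in> E \<longleftrightarrow> pl e = e"
  unfolding projections_def by (metis pl_pl rangeI rangeE)

lemma pl_in_projections [simp]: "pl x \<in> E"
  by (simp add: projections_iff)

lemma st_in_projections [simp]: "st x \<in> E"
  by (simp add: projections_iff)

lemma
  assumes "e \<in> E"
  shows projection_pl: "pl e = e"
    and projection_st: "st e = e"
    and projection_idem: "e \<cdot> e = e"
  using assms pl_mul_self [of e] st_pl [of e] by (auto simp: projections_iff)

lemma projections_commute: "e \<in> E \<Longrightarrow> f \<in> E \<Longrightarrow> e \<cdot> f = f \<cdot> e"
  by (metis pl_commute projection_pl)

lemma projections_mul_closed: "e \<in> E \<Longrightarrow> f \<in> E \<Longrightarrow> e \<cdot> f \<in> E"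
  by (metis pl_mul_pl projection_pl pl_in_projections)

lemma proj_le_refl: "e \<in> E \<Longrightarrow> e \<preceq> e"
  unfolding proj_le_def by (rule projection_idem)

lemma proj_le_trans: "e \<preceq> f \<Longrightarrow> f \<preceq> g \<Longrightarrow> e \<preceq> g"
  unfolding proj_le_def by (metis mul_assoc)

lemma proj_le_antisym: "e \<in> E \<Longrightarrow> f \<in> E \<Longrightarrow> e \<preceq> f \<Longrightarrow> f \<preceq> e \<Longrightarrow> e = f"
  unfolding proj_le_def by (metis projections_commute)

lemma proj_le_less_trans: "f \<in> E \<Longrightarrow> g \<in> E \<Longrightarrow> e \<preceq> f \<Longrightarrow> f \<prec> g \<Longrightarrow> e \<prec> g"
  unfolding proj_less_def by (metis proj_le_antisym proj_le_trans)

lemma mul_proj_le_right: "e \<in> E \<Longrightarrow> f \<in> E \<Longrightarrow> e \<cdot> f \<preceq> f"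
  unfolding proj_le_def by (metis mul_assoc projection_idem)

lemma st_le_iff: "e \<in> E \<Longrightarrow> st x \<preceq> e \<longleftrightarrow> x \<cdot> e = x"
  unfolding proj_le_def by (metis mul_assoc mul_st_self projection_st st_mul_st)

lemma lprod_Cons [simp]: "lprod (h # hs) = h \<cdot> lprod hs"
  by (simp add: list_prod_def)

lemma lprod_snoc [simp]: "lprod (hs @ [h]) = lprod hs \<cdot> h"
  by (induction hs) (simp_all add: list_prod_def mul_assoc)

lemma pl_lprod_canonical_form:
  "canonical_form mul pl st H hs \<Longrightarrow> pl (lprod hs) = pl (hd hs)"
proof (induction hs)
  case Nil
  then show ?case
    by (simp add: canonical_form_def)
next
  case (Cons h hs)
  show ?case
  proof (cases "hs = []")
    case True
    then show ?thesis
      by (simp add: list_prod_def)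
  next
    case False
    note tail = canonical_form_ConsD [OF Cons.prems False]
    have "h \<cdot> pl (hd hs) = h"
      using tail(2) st_le_iff [of "pl (hd hs)" h] by (simp add: proj_less_def)
    then show ?thesis
      using Cons.IH [OF tail(1)] pl_mul_right [of h "lprod hs"] by simp
  qed
qed

end

locale atomic_subset = star_left_ehresmann_monoid +
  fixes H :: "'a set"
  assumes atomic: "atomic mul pl st H"
begin

abbreviation canonical :: "'a list \<Rightarrow> bool" where
  "canonical hs \<equiv> canonical_form mul pl st H hs"

lemma projections_subset: "E \<subseteq> H"
  using atomic unfolding atomic_def by blast

lemma
  assumes "h \<in> H" and "e \<in> E"
  shows mul_projection_in: "h \<cdot> e \<in> H"
    and st_mul_projection: "st (h \<cdot> e) = st h \<cdot> e"
  using assms atomic unfolding atomic_def by blast+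

lemma
  assumes "h \<in> H" and "k \<in> H" and "k \<notin> E" and "pl k \<preceq> st h"
  shows mul_in_if_pl_le_st: "h \<cdot> k \<in> H"
    and st_mul_if_pl_le_st: "st (h \<cdot> k) = st k"
  using assms atomic unfolding atomic_def by blast+

lemma restriction_below_pl:
  assumes h: "h \<in> H" and not_le: "\<not> pl k \<preceq> st h"
  obtains h' where "h' \<in> H" and "h' \<cdot> k = h \<cdot> k" and "st h' \<prec> pl k"
proof
  let ?f = "st h \<cdot> pl k"
  have f: "?f \<in> E"
    by (simp add: projections_mul_closed)
  show "h \<cdot> ?f \<in> H"
    using mul_projection_in [OF h f] .
  show "h \<cdot> ?f \<cdot> k = h \<cdot> k"
    by (metis mul_assoc mul_st_self pl_mul_self)
  have "st (h \<cdot> ?f) = ?f"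
    using st_mul_projection [OF h f] by (simp add: mul_assoc [symmetric] projection_idem)
  moreover have "?f \<noteq> pl k"
    using not_le projections_commute [of "pl k" "st h"] by (auto simp: proj_le_def)
  ultimately show "st (h \<cdot> ?f) \<prec> pl k"
    by (simp add: proj_less_def mul_proj_le_right)
qed

lemma exists_canonical_form_mul:
  "set qs \<subseteq> H \<Longrightarrow> g \<in> H \<Longrightarrow>
    \<exists>rs. canonical rs \<and> lprod rs = lprod qs \<cdot> g \<and> st (last rs) \<preceq> st g"
proof (induction qs arbitrary: g rule: rev_induct)
  case Nil
  then show ?case
    by (intro exI [of _ "[g]"]) (simp add: list_prod_def proj_le_refl)
next
  case (snoc q qs)
  have q: "q \<in> H" and qs: "set qs \<subseteq> H"
    using snoc.prems by auto
  show ?case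
  proof (cases "g \<notin> E \<and> \<not> pl g \<preceq> st q")
    case False
    have "q \<cdot> g \<in> H \<and> st (q \<cdot> g) \<preceq> st g"
    proof (cases "g \<in> E")
      case True
      then show ?thesis
        using q by (simp add: mul_projection_in st_mul_projection mul_proj_le_right projection_st)
    next
      case False
      then show ?thesis
        using q snoc.prems(2) \<open>\<not> (g \<notin> E \<and> \<not> pl g \<preceq> st q)\<close>
        by (simp add: mul_in_if_pl_le_st st_mul_if_pl_le_st proj_le_refl)
    qed
    then obtain rs where "canonical rs" "lprod rs = lprod qs \<cdot> (q \<cdot> g)" "st (last rs) \<preceq> st g"
      using snoc.IH [OF qs] proj_le_trans by blast
    then show ?thesis
      by (auto simp: mul_assoc)
  next
    case True
    then obtain q' where q': "q' \<in> H" "q' \<cdot> g = q \<cdot> g" "st q' \<prec> pl g"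
      using restriction_below_pl [OF q] by blast
    obtain rs where rs: "canonical rs" "lprod rs = lprod qs \<cdot> q'" "st (last rs) \<preceq> st q'"
      using snoc.IH [OF qs q'(1)] by blast
    have "rs \<noteq> []"
      using rs(1) by (simp add: canonical_form_def)
    then have "canonical (rs @ [g])"
      using rs(1,3) q'(3) True snoc.prems(2) by (simp add: canonical_form_snoc proj_le_less_trans [OF st_in_projections pl_in_projections])
    moreover have "lprod (rs @ [g]) = lprod (qs @ [q]) \<cdot> g"
      using rs(2) q'(2) by (simp add: mul_assoc)
    ultimately show ?thesis
      by (intro exI [of _ "rs @ [g]"]) (simp add: proj_le_refl)
  qed
qed

end

locale atomic_subset_with_canonical_forms = atomic_subset +
  assumes canonical_forms: "has_canonical_forms mul one pl st H"
begin

lemma canonical_form_unique: "canonical xs \<Longrightarrow> canonical ys \<Longrightarrow> lprod xs = lprod ys \<Longrightarrow> xs = ys"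
  using canonical_forms unfolding has_canonical_forms_def by metis

lemma st_lprod_canonical_form:
  assumes hs: "canonical hs"
  shows "st (lprod hs) = st (last hs)"
proof -
  let ?m = "lprod hs"
  have "hs \<noteq> []" and "set hs \<subseteq> H"
    using hs by (simp_all add: canonical_form_def)
  obtain rs where rs: "canonical rs" "lprod rs = ?m \<cdot> st ?m" "st (last rs) \<preceq> st (st ?m)"
    using exists_canonical_form_mul [OF \<open>set hs \<subseteq> H\<close>, of "st ?m"] projections_subset
    by (metis mul_st_self st_in_projections subsetD)
  then have "rs = hs"
    using canonical_form_unique [OF rs(1) hs] by simp
  then have "st (last hs) \<preceq> st ?m"
    using rs(3) by (simp add: projection_st)
  moreover have "?m \<cdot> st (last hs) = ?m"
    using lprod_snoc [of "butlast hs" "last hs"] \<open>hs \<noteq> []\<close> by (simp add: mul_assoc)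
  then have "st ?m \<preceq> st (last hs)"
    by (simp add: st_le_iff)
  ultimately show ?thesis
    by (simp add: proj_le_antisym)
qed

lemma mul_in_iff_pl_le_st:
  assumes h: "h \<in> H" and k: "k \<in> H" "k \<notin> E"
  shows "h \<cdot> k \<in> H \<longleftrightarrow> pl k \<preceq> st h"
proof
  assume hk: "h \<cdot> k \<in> H"
  show "pl k \<preceq> st h"
  proof (rule ccontr)
    assume "\<not> pl k \<preceq> st h"
    then obtain h' where h': "h' \<in> H" "h' \<cdot> k = h \<cdot> k" "st h' \<prec> pl k"
      using restriction_below_pl [OF h] by blast
    then have "canonical [h', k]"
      using canonical_form_snoc [of "[h']"] k by simp
    then have "[h', k] = [h \<cdot> k]"
      using canonical_form_unique [of "[h', k]" "[h \<cdot> k]"] hk h'(2) by (simp add: list_prod_def)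
    then show False
      by simp
  qed
qed (use h k in \<open>rule mul_in_if_pl_le_st\<close>)

end

theorem mainTheorem11:
  fixes mul :: "'a \<Rightarrow> 'a \<Rightarrow> 'a" and one :: 'a and pl st :: "'a \<Rightarrow> 'a" and H :: "'a set"
  assumes "star_left_ehresmann mul one pl st"
    and "is_basis mul one pl st H"
  shows "(\<forall>hs. canonical_form mul pl st H hs \<longrightarrow>
            st (list_prod mul one hs) = st (last hs) \<and>
            pl (list_prod mul one hs) = pl (hd hs))
       \<and> (\<forall>h\<in>H. \<forall>k\<in>H - projections pl.
            (proj_le mul (pl k) (st h) \<longleftrightarrow> mul h k \<in> H) \<and>
            (proj_le mul (pl k) (st h) \<longrightarrow> st (mul h k) = st k))"
proof -
  interpret atomic_subset_with_canonical_forms mul one pl st H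
    using assms by unfold_locales (simp_all add: is_basis_def)
  show ?thesis
    using st_lprod_canonical_form pl_lprod_canonical_form mul_in_iff_pl_le_st st_mul_if_pl_le_st
    by blast
qed

end
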